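(* Let $B$ be a finite skew left brace and let $S$ be a maximal subbrace of $B$. Then either $\zeta(B)\subseteq S$, or $S$ is an ideal of $B$ and $B/S$ is an abelian brace whose group is cyclic of prime order.
   Context: A skew left brace (brace) is a set $B$ with two group structures $(B,+)$ and $(B,\cdot)$ with $a(b+c)=ab-a+ac$; $\lambda_a(b)=-a+ab$. A subbrace is a subset that is a subgroup of both groups; a maximal subbrace is a proper subbrace not contained in any other proper subbrace. An ideal is a subset that is a normal subgroup of both groups and $\lambda_b$-invariant for all $b$. The centre is $\zeta(B)=\{a\in B: a+b=b+a=ab=ba\ \forall b\in B\}$. A brace is abelian if $ab=a+b=b+a$ for all $a,b$. *)

theory Defs
  imports "HOL-Algebra.Algebra"
begin

text \<open>A skew left brace is given by two group structures A (the additive group (B,+),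
written with the HOL-Algebra monoid record) and M (the multiplicative group (B,.))
on the same carrier, satisfying a(b+c) = ab - a + ac.\<close>

definition skew_brace :: "'a monoid \<Rightarrow> 'a monoid \<Rightarrow> bool" where
  "skew_brace A M \<longleftrightarrow> group A \<and> group M \<and> carrier A = carrier M \<and>
     (\<forall>a\<in>carrier A. \<forall>b\<in>carrier A. \<forall>c\<in>carrier A.
        a \<otimes>\<^bsub>M\<^esub> (b \<otimes>\<^bsub>A\<^esub> c)
          = ((a \<otimes>\<^bsub>M\<^esub> b) \<otimes>\<^bsub>A\<^esub> inv\<^bsub>A\<^esub> a) \<otimes>\<^bsub>A\<^esub> (a \<otimes>\<^bsub>M\<^esub> c))"

definition brace_lambda :: "'a monoid \<Rightarrow> 'a monoid \<Rightarrow> 'a \<Rightarrow> 'a \<Rightarrow> 'a" where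
  "brace_lambda A M a b = inv\<^bsub>A\<^esub> a \<otimes>\<^bsub>A\<^esub> (a \<otimes>\<^bsub>M\<^esub> b)"

definition subbrace :: "'a set \<Rightarrow> 'a monoid \<Rightarrow> 'a monoid \<Rightarrow> bool" where
  "subbrace S A M \<longleftrightarrow> subgroup S A \<and> subgroup S M"

definition maximal_subbrace :: "'a set \<Rightarrow> 'a monoid \<Rightarrow> 'a monoid \<Rightarrow> bool" where
  "maximal_subbrace S A M \<longleftrightarrow> subbrace S A M \<and> S \<noteq> carrier A \<and>
     (\<forall>T. subbrace T A M \<and> T \<noteq> carrier A \<and> S \<subseteq> T \<longrightarrow> T = S)"

definition brace_ideal :: "'a set \<Rightarrow> 'a monoid \<Rightarrow> 'a monoid \<Rightarrow> bool" where
  "brace_ideal I A M \<longleftrightarrow> normal I A \<and> normal I M \<and>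
     (\<forall>b\<in>carrier A. \<forall>x\<in>I. brace_lambda A M b x \<in> I)"

definition brace_centre :: "'a monoid \<Rightarrow> 'a monoid \<Rightarrow> 'a set" where
  "brace_centre A M = {a \<in> carrier A. \<forall>b\<in>carrier A.
      a \<otimes>\<^bsub>A\<^esub> b = b \<otimes>\<^bsub>A\<^esub> a \<and> b \<otimes>\<^bsub>A\<^esub> a = a \<otimes>\<^bsub>M\<^esub> b \<and>
      a \<otimes>\<^bsub>M\<^esub> b = b \<otimes>\<^bsub>M\<^esub> a}"

definition abelian_brace :: "'a monoid \<Rightarrow> 'a monoid \<Rightarrow> bool" where
  "abelian_brace A M \<longleftrightarrow> skew_brace A M \<and>
     (\<forall>a\<in>carrier A. \<forall>b\<in>carrier A.
        a \<otimes>\<^bsub>M\<^esub> b = a \<otimes>\<^bsub>A\<^esub> b \<and> a \<otimes>\<^bsub>A\<^esub> b = b \<otimes>\<^bsub>A\<^esub> a)"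

end

theory Submission
  imports Defs
begin

text \<open>
  Central elements z of a skew brace satisfy z b = z + b = b + z = b z, so for every subgroup K of
  the centre the set S + K is again a subbrace. If the centre is not contained in the maximal
  subbrace S, then S + \<zeta>(B) = B. Writing b = s + c with s \<in> S and c central, conjugation by b
  and \<lambda>_b act on S as conjugation by s and \<lambda>_s do, so S is an ideal; and every coset of S
  contains a central element, so on B/S the two operations agree and commute. Finally, for a
  central c \<notin> S maximality gives S + \<langle>c\<rangle> = B, i.e. every nontrivial element of B/S generates
  it, and a group with this property is cyclic of prime order.
\<close>

lemma (in group) normal_if_central:
  assumes K: "subgroup K G" and central: "\<And>k x. k \<in> K \<Longrightarrow> x \<in> carrier G \<Longrightarrow> k \<otimes> x = x \<otimes> k"
  shows "K \<lhd> G"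
proof -
  have "x \<otimes> k \<otimes> inv x = k" if "x \<in> carrier G" "k \<in> K" for x k
    using that central[of k x] subgroup.mem_carrier[OF K] by (metis inv_closed m_assoc r_inv r_one)
  with K show ?thesis
    by (simp add: normal_inv_iff)
qed

lemma (in group) subgroup_set_mult_central:
  assumes H: "subgroup H G" and K: "subgroup K G"
    and central: "\<And>k x. k \<in> K \<Longrightarrow> x \<in> carrier G \<Longrightarrow> k \<otimes> x = x \<otimes> k"
  shows "subgroup (H <#> K) G"
proof -
  interpret second_isomorphism_grp K G H
    using normal_if_central[OF K central] H
    by (simp add: second_isomorphism_grp_def second_isomorphism_grp_axioms_def)
  have "K <#> H = H <#> K"
    using central subgroup.mem_carrier[OF H] by (auto simp: set_mult_def; metis)
  with normal_set_mult_subgroup show ?thesis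
    by simp
qed

lemma (in group) normal_if_set_mult_central:
  assumes H: "subgroup H G" and Z: "Z \<subseteq> carrier G" and supplement: "H <#> Z = carrier G"
    and central: "\<And>c x. c \<in> Z \<Longrightarrow> x \<in> carrier G \<Longrightarrow> c \<otimes> x = x \<otimes> c"
  shows "H \<lhd> G"
  unfolding normal_inv_iff
proof (intro conjI H ballI)
  fix x h assume x: "x \<in> carrier G" and h: "h \<in> H"
  with supplement obtain s c where s: "s \<in> H" and c: "c \<in> Z" and xsc: "x = s \<otimes> c"
    unfolding set_mult_def by blast
  have [simp]: "s \<in> carrier G" "c \<in> carrier G" "h \<in> carrier G"
    using s c h Z subgroup.mem_carrier[OF H] by auto
  have "x \<otimes> h \<otimes> inv x = s \<otimes> (c \<otimes> h) \<otimes> inv c \<otimes> inv s"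
    by (simp add: xsc inv_mult_group m_assoc)
  also have "\<dots> = s \<otimes> h \<otimes> inv s"
    by (simp add: central[OF c] m_assoc)
  finally show "x \<otimes> h \<otimes> inv x \<in> H"
    using s h H by (simp add: subgroup.m_closed subgroup.m_inv_closed)
qed

lemma (in normal) generate_rcos_FactGroup:
  assumes supplement: "H <#> generate G {z} = carrier G" and z: "z \<in> carrier G"
  shows "generate (G Mod H) {H #> z} = carrier (G Mod H)"
proof
  interpret Q: group "G Mod H"
    by (rule factorgroup_is_group)
  have Hz: "H #> z \<in> carrier (G Mod H)"
    using z by (simp add: carrier_FactGroup)
  then show "generate (G Mod H) {H #> z} \<subseteq> carrier (G Mod H)"
    by (simp add: Q.generate_incl)
  show "carrier (G Mod H) \<subseteq> generate (G Mod H) {H #> z}"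
  proof
    fix U assume "U \<in> carrier (G Mod H)"
    then obtain a where a: "a \<in> carrier G" "U = H #> a"
      by (auto simp: carrier_FactGroup)
    from a(1) have "a \<in> H <#> generate G {z}"
      using supplement by simp
    then obtain h and k :: int where h: "h \<in> H" and ahk: "a = h \<otimes> z [^] k"
      unfolding set_mult_def generate_pow[OF z] by blast
    have "U = (H #> h) #> z [^] k"
      using a(2) ahk h z by (simp add: coset_mult_assoc subset)
    also have "\<dots> = H #> z [^] k"
      using rcos_const[OF is_group h] by simp
    also have "\<dots> = (H #> z) [^]\<^bsub>G Mod H\<^esub> k"
      using FactGroup_int_pow[OF z] by simp
    finally show "U \<in> generate (G Mod H) {H #> z}"
      using Q.subgroup_int_pow_closed[OF Q.generate_is_subgroup generate.incl] Hz by simp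
  qed
qed

lemma (in group) cyclic_group_if_generate:
  assumes "x \<in> carrier G" "generate G {x} = carrier G"
  shows "cyclic_group G"
  unfolding cyclic_group_def
  using assms by (intro bexI[of _ x]) (simp_all add: subgroup_generated_def)


lemma (in group) prime_order_if_generated_by_nontrivial:
  assumes x: "x \<in> carrier G" "x \<noteq> \<one>"
    and gen: "\<And>y. y \<in> carrier G \<Longrightarrow> y \<noteq> \<one> \<Longrightarrow> generate G {y} = carrier G"
  shows "Factorial_Ring.prime (order G)"
proof -
  have ord_x: "ord x = order G"
    using generate_pow_card[OF x(1)] gen[OF x] by (simp add: order_def)
  have "ord x \<noteq> 1"
    using ord_eq_1 x by simp
  then obtain p where p: "Factorial_Ring.prime p" "p dvd ord x"
    using prime_factor_nat by blast
  have "x [^] p = \<one>"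
  proof (rule ccontr)
    assume "x [^] p \<noteq> \<one>"
    then have "x \<in> generate G {x [^] p}"
      using gen x by simp
    then obtain k :: int where "x = (x [^] p) [^] k"
      using generate_pow x by auto
    then have "x [^] (int p * k - 1) = \<one>"
      using x by (simp add: int_pow_diff int_pow_pow flip: int_pow_int)
    then have "int (ord x) dvd int p * k - 1"
      using int_pow_eq_id x by simp
    then have "int p dvd int p * k - 1"
      using p(2) by (meson dvd_trans int_dvd_int_iff)
    then have "int p dvd int p * k - (int p * k - 1)"
      using dvd_diff dvd_triv_left by blast
    then have "int p dvd 1"
      by simp
    with p(1) show False
      by simp
  qed
  then have "ord x dvd p"
    using pow_eq_id x by simp
  with p(1) \<open>ord x \<noteq> 1\<close> have "ord x = p"
    using prime_nat_iff by blast
  with p(1) ord_x show ?thesis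
    by simp
qed

lemma abelian_braceI:
  assumes "group A" "group M" "carrier M = carrier A"
    and mult_eq: "\<And>a b. a \<in> carrier A \<Longrightarrow> b \<in> carrier A \<Longrightarrow> a \<otimes>\<^bsub>M\<^esub> b = a \<otimes>\<^bsub>A\<^esub> b"
    and comm: "\<And>a b. a \<in> carrier A \<Longrightarrow> b \<in> carrier A \<Longrightarrow> a \<otimes>\<^bsub>A\<^esub> b = b \<otimes>\<^bsub>A\<^esub> a"
  shows "abelian_brace A M"
proof -
  interpret comm_group A
    using assms(1) comm by (rule group.group_comm_groupI)
  have distrib: "a \<otimes>\<^bsub>M\<^esub> (b \<otimes>\<^bsub>A\<^esub> c) = a \<otimes>\<^bsub>M\<^esub> b \<otimes>\<^bsub>A\<^esub> inv\<^bsub>A\<^esub> a \<otimes>\<^bsub>A\<^esub> (a \<otimes>\<^bsub>M\<^esub> c)"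
    if "a \<in> carrier A" "b \<in> carrier A" "c \<in> carrier A" for a b c
  proof -
    have "a \<otimes>\<^bsub>A\<^esub> b \<otimes>\<^bsub>A\<^esub> inv\<^bsub>A\<^esub> a \<otimes>\<^bsub>A\<^esub> (a \<otimes>\<^bsub>A\<^esub> c) = b \<otimes>\<^bsub>A\<^esub> (a \<otimes>\<^bsub>A\<^esub> inv\<^bsub>A\<^esub> a) \<otimes>\<^bsub>A\<^esub> (a \<otimes>\<^bsub>A\<^esub> c)"
      using that by (simp add: m_assoc m_comm[of a b])
    also have "\<dots> = a \<otimes>\<^bsub>A\<^esub> (b \<otimes>\<^bsub>A\<^esub> c)"
      using that by (simp add: m_lcomm[of b a c])
    finally show ?thesis
      using that by (simp add: mult_eq)
  qed
  show ?thesis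
    unfolding abelian_brace_def skew_brace_def
    by (intro conjI ballI assms(1,2) distrib mult_eq comm) (simp_all add: assms(3))
qed

lemma subbrace_subset: "subbrace S A M \<Longrightarrow> S \<subseteq> carrier A"
  by (simp add: subbrace_def subgroup.subset)

locale skew_left_brace = A: group A + M: group M for A M :: "'a monoid" +
  assumes carrier_M: "carrier M = carrier A"
    and distrib: "\<lbrakk>a \<in> carrier A; b \<in> carrier A; c \<in> carrier A\<rbrakk> \<Longrightarrow>
      a \<otimes>\<^bsub>M\<^esub> (b \<otimes>\<^bsub>A\<^esub> c) = a \<otimes>\<^bsub>M\<^esub> b \<otimes>\<^bsub>A\<^esub> inv\<^bsub>A\<^esub> a \<otimes>\<^bsub>A\<^esub> (a \<otimes>\<^bsub>M\<^esub> c)"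

lemma skew_brace_iff: "skew_brace A M \<longleftrightarrow> skew_left_brace A M"
  by (auto simp: skew_brace_def skew_left_brace_def skew_left_brace_axioms_def)

context skew_left_brace
begin

abbreviation centre :: "'a set" where
  "centre \<equiv> brace_centre A M"

lemma one_M_eq_one_A: "\<one>\<^bsub>M\<^esub> = \<one>\<^bsub>A\<^esub>"
proof -
  have e: "\<one>\<^bsub>A\<^esub> \<in> carrier M" "\<one>\<^bsub>A\<^esub> \<otimes>\<^bsub>M\<^esub> \<one>\<^bsub>A\<^esub> \<in> carrier A"
    using M.m_closed[of "\<one>\<^bsub>A\<^esub>" "\<one>\<^bsub>A\<^esub>"] by (simp_all add: carrier_M)
  have "\<one>\<^bsub>A\<^esub> \<otimes>\<^bsub>M\<^esub> \<one>\<^bsub>A\<^esub> = \<one>\<^bsub>A\<^esub> \<otimes>\<^bsub>M\<^esub> \<one>\<^bsub>A\<^esub> \<otimes>\<^bsub>A\<^esub> (\<one>\<^bsub>A\<^esub> \<otimes>\<^bsub>M\<^esub> \<one>\<^bsub>A\<^esub>)"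
    using distrib[of "\<one>\<^bsub>A\<^esub>" "\<one>\<^bsub>A\<^esub>" "\<one>\<^bsub>A\<^esub>"] e by simp
  then have "\<one>\<^bsub>A\<^esub> \<otimes>\<^bsub>M\<^esub> \<one>\<^bsub>A\<^esub> = \<one>\<^bsub>A\<^esub>"
    using e by simp
  then show ?thesis
    using M.l_cancel_one[OF e(1) e(1)] by simp
qed

lemma centre_closed: "z \<in> centre \<Longrightarrow> z \<in> carrier A"
  by (simp add: brace_centre_def)

lemma centre_add_commute: "z \<in> centre \<Longrightarrow> b \<in> carrier A \<Longrightarrow> z \<otimes>\<^bsub>A\<^esub> b = b \<otimes>\<^bsub>A\<^esub> z"
  by (simp add: brace_centre_def)

lemma centre_mult_commute: "z \<in> centre \<Longrightarrow> b \<in> carrier A \<Longrightarrow> z \<otimes>\<^bsub>M\<^esub> b = b \<otimes>\<^bsub>M\<^esub> z"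
  by (simp add: brace_centre_def)

lemma centre_mult_eq_add: "z \<in> centre \<Longrightarrow> b \<in> carrier A \<Longrightarrow> z \<otimes>\<^bsub>M\<^esub> b = z \<otimes>\<^bsub>A\<^esub> b"
  by (simp add: brace_centre_def)

lemma mult_centre_eq_add: "z \<in> centre \<Longrightarrow> b \<in> carrier A \<Longrightarrow> b \<otimes>\<^bsub>M\<^esub> z = b \<otimes>\<^bsub>A\<^esub> z"
  by (simp add: brace_centre_def)

lemma centreI:
  assumes "z \<in> carrier A"
    and "\<And>b. b \<in> carrier A \<Longrightarrow> z \<otimes>\<^bsub>A\<^esub> b = b \<otimes>\<^bsub>A\<^esub> z"
    and "\<And>b. b \<in> carrier A \<Longrightarrow> z \<otimes>\<^bsub>M\<^esub> b = z \<otimes>\<^bsub>A\<^esub> b"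
    and "\<And>b. b \<in> carrier A \<Longrightarrow> b \<otimes>\<^bsub>M\<^esub> z = b \<otimes>\<^bsub>A\<^esub> z"
  shows "z \<in> centre"
  using assms by (simp add: brace_centre_def)

lemma M_m_closed [simp]: "a \<in> carrier A \<Longrightarrow> b \<in> carrier A \<Longrightarrow> a \<otimes>\<^bsub>M\<^esub> b \<in> carrier A"
  using M.m_closed by (simp add: carrier_M)

lemma centre_inv_eq: "z \<in> centre \<Longrightarrow> inv\<^bsub>M\<^esub> z = inv\<^bsub>A\<^esub> z"
  using M.inv_equality[of "inv\<^bsub>A\<^esub> z" z] centre_closed mult_centre_eq_add[of z "inv\<^bsub>A\<^esub> z"]
  by (simp add: carrier_M one_M_eq_one_A)

lemma centre_one: "\<one>\<^bsub>A\<^esub> \<in> centre"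
proof (rule centreI)
  fix b assume "b \<in> carrier A"
  then show "\<one>\<^bsub>A\<^esub> \<otimes>\<^bsub>M\<^esub> b = \<one>\<^bsub>A\<^esub> \<otimes>\<^bsub>A\<^esub> b" "b \<otimes>\<^bsub>M\<^esub> \<one>\<^bsub>A\<^esub> = b \<otimes>\<^bsub>A\<^esub> \<one>\<^bsub>A\<^esub>"
    using M.l_one[of b] M.r_one[of b] by (simp_all add: carrier_M one_M_eq_one_A)
qed simp_all

lemma centre_inv_closed:
  assumes z: "z \<in> centre"
  shows "inv\<^bsub>A\<^esub> z \<in> centre"
proof (rule centreI)
  let ?y = "inv\<^bsub>A\<^esub> z"
  have [simp]: "z \<in> carrier A" "?y \<in> carrier A"
    using centre_closed[OF z] by simp_all
  have yz: "?y \<otimes>\<^bsub>M\<^esub> z = \<one>\<^bsub>M\<^esub>" "z \<otimes>\<^bsub>M\<^esub> ?y = \<one>\<^bsub>M\<^esub>"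
    by (simp_all add: mult_centre_eq_add[OF z] centre_mult_eq_add[OF z] one_M_eq_one_A)
  fix b assume [simp]: "b \<in> carrier A"
  have "?y \<otimes>\<^bsub>A\<^esub> b = ?y \<otimes>\<^bsub>A\<^esub> (b \<otimes>\<^bsub>A\<^esub> z) \<otimes>\<^bsub>A\<^esub> ?y"
    by (simp add: A.m_assoc)
  also have "\<dots> = b \<otimes>\<^bsub>A\<^esub> ?y"
    by (simp add: centre_add_commute[OF z, of b, symmetric] A.m_assoc[symmetric])
  finally show "?y \<otimes>\<^bsub>A\<^esub> b = b \<otimes>\<^bsub>A\<^esub> ?y" .
  have "?y \<otimes>\<^bsub>M\<^esub> b = ?y \<otimes>\<^bsub>M\<^esub> (z \<otimes>\<^bsub>M\<^esub> (?y \<otimes>\<^bsub>A\<^esub> b))"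
    by (simp add: centre_mult_eq_add[OF z] A.m_assoc[symmetric])
  also have "\<dots> = ?y \<otimes>\<^bsub>A\<^esub> b"
    using yz by (simp add: M.m_assoc[symmetric] carrier_M)
  finally show "?y \<otimes>\<^bsub>M\<^esub> b = ?y \<otimes>\<^bsub>A\<^esub> b" .
  have "b \<otimes>\<^bsub>M\<^esub> ?y = (b \<otimes>\<^bsub>A\<^esub> ?y \<otimes>\<^bsub>A\<^esub> z) \<otimes>\<^bsub>M\<^esub> ?y"
    by (simp add: A.m_assoc)
  also have "\<dots> = b \<otimes>\<^bsub>A\<^esub> ?y"
    using yz by (simp add: mult_centre_eq_add[OF z, symmetric] M.m_assoc carrier_M)
  finally show "b \<otimes>\<^bsub>M\<^esub> ?y = b \<otimes>\<^bsub>A\<^esub> ?y" .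
qed (simp add: centre_closed[OF z])

lemma centre_mult_closed:
  assumes u: "u \<in> centre" and v: "v \<in> centre"
  shows "u \<otimes>\<^bsub>A\<^esub> v \<in> centre"
proof (rule centreI)
  have [simp]: "u \<in> carrier A" "v \<in> carrier A"
    using u v centre_closed by simp_all
  have uv: "u \<otimes>\<^bsub>A\<^esub> v = u \<otimes>\<^bsub>M\<^esub> v"
    by (simp add: centre_mult_eq_add[OF u])
  fix b assume [simp]: "b \<in> carrier A"
  have "u \<otimes>\<^bsub>A\<^esub> v \<otimes>\<^bsub>A\<^esub> b = u \<otimes>\<^bsub>A\<^esub> (b \<otimes>\<^bsub>A\<^esub> v)"
    by (simp add: A.m_assoc centre_add_commute[OF v])
  also have "\<dots> = u \<otimes>\<^bsub>A\<^esub> b \<otimes>\<^bsub>A\<^esub> v"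
    by (simp add: A.m_assoc)
  also have "\<dots> = b \<otimes>\<^bsub>A\<^esub> (u \<otimes>\<^bsub>A\<^esub> v)"
    by (simp add: centre_add_commute[OF u, of b] A.m_assoc)
  finally show "u \<otimes>\<^bsub>A\<^esub> v \<otimes>\<^bsub>A\<^esub> b = b \<otimes>\<^bsub>A\<^esub> (u \<otimes>\<^bsub>A\<^esub> v)" .
  have "u \<otimes>\<^bsub>A\<^esub> v \<otimes>\<^bsub>M\<^esub> b = u \<otimes>\<^bsub>M\<^esub> (v \<otimes>\<^bsub>M\<^esub> b)"
    unfolding uv by (simp add: M.m_assoc carrier_M)
  also have "\<dots> = u \<otimes>\<^bsub>A\<^esub> v \<otimes>\<^bsub>A\<^esub> b"
    by (simp add: centre_mult_eq_add[OF u] centre_mult_eq_add[OF v] A.m_assoc)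
  finally show "u \<otimes>\<^bsub>A\<^esub> v \<otimes>\<^bsub>M\<^esub> b = u \<otimes>\<^bsub>A\<^esub> v \<otimes>\<^bsub>A\<^esub> b" .
  have "b \<otimes>\<^bsub>M\<^esub> (u \<otimes>\<^bsub>A\<^esub> v) = b \<otimes>\<^bsub>M\<^esub> u \<otimes>\<^bsub>M\<^esub> v"
    unfolding uv by (simp add: M.m_assoc carrier_M)
  also have "\<dots> = b \<otimes>\<^bsub>A\<^esub> (u \<otimes>\<^bsub>A\<^esub> v)"
    by (simp add: mult_centre_eq_add[OF u] mult_centre_eq_add[OF v] A.m_assoc)
  finally show "b \<otimes>\<^bsub>M\<^esub> (u \<otimes>\<^bsub>A\<^esub> v) = b \<otimes>\<^bsub>A\<^esub> (u \<otimes>\<^bsub>A\<^esub> v)" .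
qed (simp add: centre_closed[OF u] centre_closed[OF v])

lemma subgroup_centre: "subgroup centre A"
proof (rule A.subgroupI)
  show "centre \<subseteq> carrier A"
    using centre_closed by blast
  show "centre \<noteq> {}"
    using centre_one by blast
qed (simp_all add: centre_inv_closed centre_mult_closed)

lemma subgroup_M_if_central:
  assumes K: "subgroup K A" and "K \<subseteq> centre"
  shows "subgroup K M"
proof (rule M.subgroupI)
  have central: "k \<in> centre" if "k \<in> K" for k
    using that assms(2) by blast
  show "K \<subseteq> carrier M"
    using subgroup.subset[OF K] carrier_M by simp
  show "K \<noteq> {}"
    using subgroup.one_closed[OF K] by blast
  show "inv\<^bsub>M\<^esub> k \<in> K" if "k \<in> K" for k
    using centre_inv_eq[OF central] subgroup.m_inv_closed[OF K] that by simp
  show "k \<otimes>\<^bsub>M\<^esub> l \<in> K" if "k \<in> K" "l \<in> K" for k l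
    using centre_mult_eq_add[OF central] subgroup.m_closed[OF K] subgroup.mem_carrier[OF K] that
    by simp
qed

lemma set_mult_M_eq_set_mult_A:
  assumes "S \<subseteq> carrier A" "K \<subseteq> centre"
  shows "S <#>\<^bsub>M\<^esub> K = S <#>\<^bsub>A\<^esub> K"
  unfolding set_mult_def using assms by (intro SUP_cong refl) (auto simp: mult_centre_eq_add subsetD)

lemma subbrace_set_mult_centre:
  assumes S: "subbrace S A M" and K: "subgroup K A" "K \<subseteq> centre"
  shows "subbrace (S <#>\<^bsub>A\<^esub> K) A M"
proof -
  have SA: "subgroup S A" and SM: "subgroup S M"
    using S by (simp_all add: subbrace_def)
  have "subgroup (S <#>\<^bsub>A\<^esub> K) A"
    using A.subgroup_set_mult_central[OF SA K(1)] centre_add_commute K(2) by blast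
  moreover have "subgroup (S <#>\<^bsub>M\<^esub> K) M"
    using M.subgroup_set_mult_central[OF SM subgroup_M_if_central[OF K]] centre_mult_commute K(2)
    by (auto simp: carrier_M)
  ultimately show ?thesis
    using set_mult_M_eq_set_mult_A[OF subbrace_subset[OF S] K(2)] by (simp add: subbrace_def)
qed

lemma maximal_subbrace_set_mult_centre:
  assumes max: "maximal_subbrace S A M" and K: "subgroup K A" "K \<subseteq> centre" "\<not> K \<subseteq> S"
  shows "S <#>\<^bsub>A\<^esub> K = carrier A"
proof (rule ccontr)
  assume proper: "S <#>\<^bsub>A\<^esub> K \<noteq> carrier A"
  have S: "subbrace S A M"
    using max by (simp add: maximal_subbrace_def)
  then have "S \<subseteq> S <#>\<^bsub>A\<^esub> K"
    using subgroup.one_closed[OF K(1)] subgroup.mem_carrier[of S A]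
    by (force simp: subbrace_def set_mult_def)
  with max proper subbrace_set_mult_centre[OF S K(1,2)] have "S <#>\<^bsub>A\<^esub> K = S"
    by (simp add: maximal_subbrace_def)
  moreover have "K \<subseteq> S <#>\<^bsub>A\<^esub> K"
    using S subgroup.one_closed[of S A] subgroup.mem_carrier[OF K(1)]
    by (force simp: subbrace_def set_mult_def)
  ultimately show False
    using K(3) by simp
qed

lemma brace_lambda_mult_centre:
  assumes c: "c \<in> centre" and s: "s \<in> carrier A" and x: "x \<in> carrier A"
  shows "brace_lambda A M (s \<otimes>\<^bsub>A\<^esub> c) x = brace_lambda A M s x"
proof -
  have [simp]: "c \<in> carrier A"
    using centre_closed[OF c] .
  have sc: "s \<otimes>\<^bsub>A\<^esub> c = c \<otimes>\<^bsub>A\<^esub> s"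
    using centre_add_commute[OF c s] by simp
  have "(s \<otimes>\<^bsub>A\<^esub> c) \<otimes>\<^bsub>M\<^esub> x = c \<otimes>\<^bsub>M\<^esub> s \<otimes>\<^bsub>M\<^esub> x"
    unfolding sc by (simp add: centre_mult_eq_add[OF c s])
  also have "\<dots> = c \<otimes>\<^bsub>M\<^esub> (s \<otimes>\<^bsub>M\<^esub> x)"
    using s x by (simp add: M.m_assoc carrier_M)
  also have "\<dots> = c \<otimes>\<^bsub>A\<^esub> (s \<otimes>\<^bsub>M\<^esub> x)"
    using s x by (simp add: centre_mult_eq_add[OF c])
  finally have mult: "(s \<otimes>\<^bsub>A\<^esub> c) \<otimes>\<^bsub>M\<^esub> x = c \<otimes>\<^bsub>A\<^esub> (s \<otimes>\<^bsub>M\<^esub> x)" .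
  have inv: "inv\<^bsub>A\<^esub> (s \<otimes>\<^bsub>A\<^esub> c) = inv\<^bsub>A\<^esub> s \<otimes>\<^bsub>A\<^esub> inv\<^bsub>A\<^esub> c"
    unfolding sc using s by (simp add: A.inv_mult_group)
  have cancel: "inv\<^bsub>A\<^esub> c \<otimes>\<^bsub>A\<^esub> (c \<otimes>\<^bsub>A\<^esub> y) = y" if "y \<in> carrier A" for y
    using that by (simp add: A.m_assoc[symmetric])
  show ?thesis
    unfolding brace_lambda_def mult inv using s x by (simp add: A.m_assoc cancel)
qed

context
  fixes S :: "'a set"
  assumes S: "subbrace S A M" and supplement: "S <#>\<^bsub>A\<^esub> centre = carrier A"
begin

lemma centre_decompositionE:
  assumes "b \<in> carrier A"
  obtains s c where "s \<in> S" "c \<in> centre" "b = s \<otimes>\<^bsub>A\<^esub> c"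
  using assms supplement unfolding set_mult_def by blast

lemma normal_A: "S \<lhd> A"
  using A.normal_if_set_mult_central[OF _ _ supplement] S centre_closed centre_add_commute
  by (auto simp: subbrace_def)

lemma normal_M: "S \<lhd> M"
proof (rule M.normal_if_set_mult_central)
  show "subgroup S M"
    using S by (simp add: subbrace_def)
  show "centre \<subseteq> carrier M"
    using centre_closed carrier_M by auto
  show "S <#>\<^bsub>M\<^esub> centre = carrier M"
    using set_mult_M_eq_set_mult_A[OF subbrace_subset[OF S] order_refl] supplement carrier_M by simp
  show "c \<otimes>\<^bsub>M\<^esub> x = x \<otimes>\<^bsub>M\<^esub> c" if "c \<in> centre" "x \<in> carrier M" for c x
    using centre_mult_commute that carrier_M by simp
qed

lemma brace_ideal_if_central_supplement: "brace_ideal S A M"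
  unfolding brace_ideal_def
proof (intro conjI normal_A normal_M ballI)
  fix b x assume b: "b \<in> carrier A" and x: "x \<in> S"
  obtain s c where s: "s \<in> S" and c: "c \<in> centre" and bsc: "b = s \<otimes>\<^bsub>A\<^esub> c"
    using centre_decompositionE[OF b] .
  have "brace_lambda A M b x = inv\<^bsub>A\<^esub> s \<otimes>\<^bsub>A\<^esub> (s \<otimes>\<^bsub>M\<^esub> x)"
    using brace_lambda_mult_centre[OF c] s x subbrace_subset[OF S] bsc by (auto simp: brace_lambda_def)
  then show "brace_lambda A M b x \<in> S"
    using S s x by (simp add: subbrace_def subgroup.m_closed subgroup.m_inv_closed)
qed

lemma r_coset_mult_centre: "s \<in> S \<Longrightarrow> c \<in> carrier A \<Longrightarrow> S #>\<^bsub>A\<^esub> (s \<otimes>\<^bsub>A\<^esub> c) = S #>\<^bsub>A\<^esub> c"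
  using S subbrace_subset[OF S]
  by (simp add: A.coset_mult_assoc[symmetric] subset_iff subbrace_def subgroup.rcos_const)

lemma r_coset_M_eq_r_coset_A:
  assumes b: "b \<in> carrier A"
  shows "S #>\<^bsub>M\<^esub> b = S #>\<^bsub>A\<^esub> b"
proof -
  obtain s c where s: "s \<in> S" and c: "c \<in> centre" and bsc: "b = s \<otimes>\<^bsub>A\<^esub> c"
    using centre_decompositionE[OF b] .
  have sc: "s \<in> carrier A" "c \<in> carrier A"
    using s c subbrace_subset[OF S] centre_closed by auto
  have "S #>\<^bsub>M\<^esub> b = (S #>\<^bsub>M\<^esub> s) #>\<^bsub>M\<^esub> c"
    using bsc sc subbrace_subset[OF S] mult_centre_eq_add[OF c]
    by (simp add: M.coset_mult_assoc carrier_M)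
  also have "\<dots> = S #>\<^bsub>M\<^esub> c"
    using S s by (simp add: subbrace_def subgroup.rcos_const)
  also have "\<dots> = S #>\<^bsub>A\<^esub> c"
    unfolding r_coset_def using subbrace_subset[OF S]
    by (intro SUP_cong refl) (auto simp: mult_centre_eq_add[OF c])
  also have "\<dots> = S #>\<^bsub>A\<^esub> b"
    using r_coset_mult_centre[OF s sc(2)] bsc by simp
  finally show ?thesis .
qed

lemma carrier_Mod_centre: "carrier (A Mod S) = (\<lambda>c. S #>\<^bsub>A\<^esub> c) ` centre"
proof
  show "carrier (A Mod S) \<subseteq> (\<lambda>c. S #>\<^bsub>A\<^esub> c) ` centre"
  proof
    fix U assume "U \<in> carrier (A Mod S)"
    then obtain b where b: "b \<in> carrier A" and U: "U = S #>\<^bsub>A\<^esub> b"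
      by (auto simp: carrier_FactGroup)
    obtain s c where s: "s \<in> S" and c: "c \<in> centre" and bsc: "b = s \<otimes>\<^bsub>A\<^esub> c"
      using centre_decompositionE[OF b] .
    show "U \<in> (\<lambda>c. S #>\<^bsub>A\<^esub> c) ` centre"
      using r_coset_mult_centre[OF s centre_closed[OF c]] U bsc c by blast
  qed
  show "(\<lambda>c. S #>\<^bsub>A\<^esub> c) ` centre \<subseteq> carrier (A Mod S)"
    using centre_closed by (auto simp: carrier_FactGroup)
qed

lemma abelian_brace_Mod: "abelian_brace (A Mod S) (M Mod S)"
proof (rule abelian_braceI)
  show "group (A Mod S)" "group (M Mod S)"
    using normal_A normal_M by (simp_all add: normal.factorgroup_is_group)
  show "carrier (M Mod S) = carrier (A Mod S)"
    using r_coset_M_eq_r_coset_A by (simp add: carrier_FactGroup carrier_M)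
  have mult_A: "(S #>\<^bsub>A\<^esub> c) \<otimes>\<^bsub>A Mod S\<^esub> (S #>\<^bsub>A\<^esub> d) = S #>\<^bsub>A\<^esub> (c \<otimes>\<^bsub>A\<^esub> d)"
    if "c \<in> centre" "d \<in> centre" for c d
    using normal.rcos_sum[OF normal_A] centre_closed that by simp
  have mult_M: "(S #>\<^bsub>A\<^esub> c) \<otimes>\<^bsub>M Mod S\<^esub> (S #>\<^bsub>A\<^esub> d) = S #>\<^bsub>A\<^esub> (c \<otimes>\<^bsub>A\<^esub> d)"
    if "c \<in> centre" "d \<in> centre" for c d
  proof -
    have cd: "c \<in> carrier A" "d \<in> carrier A"
      using centre_closed that by auto
    then have "(S #>\<^bsub>A\<^esub> c) \<otimes>\<^bsub>M Mod S\<^esub> (S #>\<^bsub>A\<^esub> d) = S #>\<^bsub>M\<^esub> (c \<otimes>\<^bsub>M\<^esub> d)"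
      using normal.rcos_sum[OF normal_M] by (simp add: carrier_M flip: r_coset_M_eq_r_coset_A)
    also have "\<dots> = S #>\<^bsub>A\<^esub> (c \<otimes>\<^bsub>A\<^esub> d)"
      using cd by (simp add: r_coset_M_eq_r_coset_A centre_mult_eq_add[OF that(1)])
    finally show ?thesis .
  qed
  fix U V assume "U \<in> carrier (A Mod S)" "V \<in> carrier (A Mod S)"
  then obtain c d where cd: "c \<in> centre" "d \<in> centre" and UV: "U = S #>\<^bsub>A\<^esub> c" "V = S #>\<^bsub>A\<^esub> d"
    unfolding carrier_Mod_centre by blast
  show "U \<otimes>\<^bsub>M Mod S\<^esub> V = U \<otimes>\<^bsub>A Mod S\<^esub> V"
    using mult_A[OF cd] mult_M[OF cd] UV by simp
  show "U \<otimes>\<^bsub>A Mod S\<^esub> V = V \<otimes>\<^bsub>A Mod S\<^esub> U"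
    using mult_A[OF cd] mult_A[OF cd(2,1)] UV centre_add_commute[OF cd(1) centre_closed[OF cd(2)]]
    by simp
qed

end

lemma generate_Mod_maximal_subbrace:
  assumes max: "maximal_subbrace S A M" and supplement: "S <#>\<^bsub>A\<^esub> centre = carrier A"
    and U: "U \<in> carrier (A Mod S)" "U \<noteq> \<one>\<^bsub>A Mod S\<^esub>"
  shows "generate (A Mod S) {U} = carrier (A Mod S)"
proof -
  have S: "subbrace S A M"
    using max by (simp add: maximal_subbrace_def)
  obtain c where c: "c \<in> centre" and Uc: "U = S #>\<^bsub>A\<^esub> c"
    using U(1) carrier_Mod_centre[OF S supplement] by blast
  have "c \<notin> S"
    using U(2) Uc S centre_closed[OF c] A.coset_join2 by (auto simp: subbrace_def)
  moreover have "generate A {c} \<subseteq> centre"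
    using A.generate_subgroup_incl[OF _ subgroup_centre] c by simp
  moreover have "c \<in> generate A {c}"
    by (simp add: generate.incl)
  ultimately have "S <#>\<^bsub>A\<^esub> generate A {c} = carrier A"
    using maximal_subbrace_set_mult_centre[OF max A.generate_is_subgroup] centre_closed[OF c]
    by blast
  then show ?thesis
    using normal.generate_rcos_FactGroup[OF normal_A[OF S supplement]] centre_closed[OF c] Uc by simp
qed

end

theorem theorem4p7:
  fixes A M :: "'a monoid" and S :: "'a set"
  assumes "skew_brace A M"
    and "finite (carrier A)"
    and "maximal_subbrace S A M"
  shows "brace_centre A M \<subseteq> S \<or>
         (brace_ideal S A M \<and> abelian_brace (A Mod S) (M Mod S) \<and>
          cyclic_group (A Mod S) \<and> Factorial_Ring.prime (order (A Mod S)))"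
proof (cases "brace_centre A M \<subseteq> S")
  case False
  then obtain z where z: "z \<in> brace_centre A M" "z \<notin> S"
    by blast
  interpret skew_left_brace A M
    using assms(1) skew_brace_iff by blast
  have S: "subbrace S A M"
    using assms(3) by (simp add: maximal_subbrace_def)
  have supplement: "S <#>\<^bsub>A\<^esub> centre = carrier A"
    using maximal_subbrace_set_mult_centre[OF assms(3) subgroup_centre order_refl] z by blast
  interpret Q: group "A Mod S"
    using normal.factorgroup_is_group[OF normal_A[OF S supplement]] .
  have Sz: "S #>\<^bsub>A\<^esub> z \<in> carrier (A Mod S)" "S #>\<^bsub>A\<^esub> z \<noteq> \<one>\<^bsub>A Mod S\<^esub>"
    using z S centre_closed A.coset_join1 by (auto simp: carrier_FactGroup subbrace_def)
  note generate = generate_Mod_maximal_subbrace[OF assms(3) supplement]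
  have "brace_ideal S A M \<and> abelian_brace (A Mod S) (M Mod S) \<and>
        cyclic_group (A Mod S) \<and> Factorial_Ring.prime (order (A Mod S))"
    using brace_ideal_if_central_supplement[OF S supplement] abelian_brace_Mod[OF S supplement]
      Q.cyclic_group_if_generate[OF Sz(1) generate[OF Sz]]
      Q.prime_order_if_generated_by_nontrivial[OF Sz generate]
    by blast
  then show ?thesis ..
qed simp

end
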